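(* Let $n$ be a positive integer for which Williamson type matrices of order $n$ exist. Then there exist four mutually quasi-unbiased Hadamard matrices for the parameters $(16n,16n,16,16n^2)$.
   Context: Williamson type matrices of order $n$ are four $n\times n$ $(1,-1)$-matrices $A,B,C,D$ such that $XY^\top=YX^\top$ for all $X,Y\in\{A,B,C,D\}$ and $AA^\top+BB^\top+CC^\top+DD^\top=4nI_n$. A Hadamard matrix of order $N$ is an $N\times N$ $(1,-1)$-matrix $H$ with $HH^\top=NI_N$; a weighing matrix of order $N$ and weight $k$ is an $N\times N$ $(0,1,-1)$-matrix $W$ with $WW^\top=kI_N$. Two weighing matrices (e.g. Hadamard matrices) $W_1,W_2$ of order $N$ and weight $k$ are quasi-unbiased for parameters $(N,k,l,a)$ if $\frac1{\sqrt a}W_1W_2^\top$ is a weighing matrix of order $N$ and weight $l$; mutually quasi-unbiased means pairwise. *)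

theory Defs
  imports "Jordan_Normal_Form.Matrix"
begin

definition pm1_mat :: "real mat \<Rightarrow> bool" where
  "pm1_mat A \<longleftrightarrow> (\<forall>i<dim_row A. \<forall>j<dim_col A. A $$ (i,j) = 1 \<or> A $$ (i,j) = -1)"

definition zpm1_mat :: "real mat \<Rightarrow> bool" where
  "zpm1_mat A \<longleftrightarrow> (\<forall>i<dim_row A. \<forall>j<dim_col A.
      A $$ (i,j) = 0 \<or> A $$ (i,j) = 1 \<or> A $$ (i,j) = -1)"

definition williamson_type :: "nat \<Rightarrow> real mat \<Rightarrow> real mat \<Rightarrow> real mat \<Rightarrow> real mat \<Rightarrow> bool" where
  "williamson_type n A B C D \<longleftrightarrow>
     (\<forall>X\<in>{A,B,C,D}. X \<in> carrier_mat n n \<and> pm1_mat X) \<and>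
     (\<forall>X\<in>{A,B,C,D}. \<forall>Y\<in>{A,B,C,D}. X * transpose_mat Y = Y * transpose_mat X) \<and>
     A * transpose_mat A + B * transpose_mat B + C * transpose_mat C + D * transpose_mat D
       = (4 * real n) \<cdot>\<^sub>m 1\<^sub>m n"

definition hadamard_mat :: "nat \<Rightarrow> real mat \<Rightarrow> bool" where
  "hadamard_mat N H \<longleftrightarrow> H \<in> carrier_mat N N \<and> pm1_mat H \<and>
     H * transpose_mat H = real N \<cdot>\<^sub>m 1\<^sub>m N"

definition weighing_mat :: "nat \<Rightarrow> nat \<Rightarrow> real mat \<Rightarrow> bool" where
  "weighing_mat N k W \<longleftrightarrow> W \<in> carrier_mat N N \<and> zpm1_mat W \<and>
     W * transpose_mat W = real k \<cdot>\<^sub>m 1\<^sub>m N"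

definition quasi_unbiased :: "nat \<Rightarrow> nat \<Rightarrow> nat \<Rightarrow> real \<Rightarrow> real mat \<Rightarrow> real mat \<Rightarrow> bool" where
  "quasi_unbiased N k l a W1 W2 \<longleftrightarrow> weighing_mat N k W1 \<and> weighing_mat N k W2 \<and>
     weighing_mat N l ((1 / sqrt a) \<cdot>\<^sub>m (W1 * transpose_mat W2))"

definition mutually_quasi_unbiased :: "nat \<Rightarrow> nat \<Rightarrow> nat \<Rightarrow> real \<Rightarrow> nat set \<Rightarrow> (nat \<Rightarrow> real mat) \<Rightarrow> bool" where
  "mutually_quasi_unbiased N k l a I W \<longleftrightarrow>
     (\<forall>i\<in>I. \<forall>j\<in>I. i \<noteq> j \<longrightarrow> quasi_unbiased N k l a (W i) (W j))"

end

theory Submission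
  imports Defs "Jordan_Normal_Form.Determinant"
begin

(* The Williamson array [A B C D; -B A -D C; -C D A -B; -D -C B A] is a Hadamard matrix G
   of order 4n. Cut the rows of G into four blocks of n rows and, for x in GF(4), let P_x
   permute the blocks by t -> t + x. With U the Sylvester matrix of order 4, the block matrix
   H_i = (U_hb P_(ib) G)_(h,b) is Hadamard of order 16n for every i in GF(4), because each
   P_(ib) G is. The entry of H_i H_j^T at rows (h,t,k) and (h',t',k') is
   4n * sum_b U_hb U_h'b [t + ib = t' + jb and k = k'], and for i ~= j the equation
   (i + j) b = t + t' has exactly one solution b. Hence (1/4n) H_i H_j^T has entries in
   {0, 1, -1}, and its Gram matrix is 16 I because H_i and H_j are Hadamard. *)

lemma sum_lessThan_mult_nat:
  fixes g :: "nat \<Rightarrow> 'a::comm_monoid_add"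
  shows "(\<Sum>c<m * n. g c) = (\<Sum>q<m. \<Sum>p<n. g (q * n + p))"
  by (simp add: sum.nat_group[symmetric] sum.shift_bounds_nat_ivl[of g 0 _ n, simplified]
      atLeast0LessThan add.commute)

lemma mult_add_less_mult:
  fixes n :: nat
  assumes "q < m" "c < n"
  shows "q * n + c < m * n"
proof -
  have "q * n + c < Suc q * n" using assms(2) by simp
  also have "\<dots> \<le> m * n" using assms(1) by (intro mult_right_mono) auto
  finally show ?thesis .
qed

lemma mult_add_eq_mult_add_iff:
  fixes n :: nat
  assumes "k < n" "k' < n"
  shows "x * n + k = y * n + k' \<longleftrightarrow> x = y \<and> k = k'"
proof
  assume eq: "x * n + k = y * n + k'"
  have "x = (x * n + k) div n" "k = (x * n + k) mod n" using assms(1) by simp_all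
  moreover have "y = (y * n + k') div n" "k' = (y * n + k') mod n" using assms(2) by simp_all
  ultimately show "x = y \<and> k = k'" using eq by metis
qed simp

lemma index_mult_transpose_mat:
  assumes "A \<in> carrier_mat k l" "B \<in> carrier_mat k' l" "i < k" "j < k'"
  shows "(A * transpose_mat B) $$ (i, j) = (\<Sum>c<l. A $$ (i, c) * B $$ (j, c))"
  using assms by (simp add: scalar_prod_def atLeast0LessThan)

lemma smult_smult_mat: "a \<cdot>\<^sub>m (b \<cdot>\<^sub>m A) = (a * b :: 'a::semigroup_mult) \<cdot>\<^sub>m A"
  by (rule eq_matI) (simp_all add: mult.assoc)

lemma one_smult_mat [simp]: "1 \<cdot>\<^sub>m A = (A :: 'a::monoid_mult mat)"
  by (rule eq_matI) simp_all

lemma transpose_smult_mat: "transpose_mat (c \<cdot>\<^sub>m A) = c \<cdot>\<^sub>m transpose_mat A"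
  by (rule eq_matI) auto

lemma smult_mult_transpose_smult:
  assumes "A \<in> carrier_mat k l" "B \<in> carrier_mat k' l"
  shows "(a \<cdot>\<^sub>m A) * transpose_mat (b \<cdot>\<^sub>m B) = (a * b :: 'a::comm_ring) \<cdot>\<^sub>m (A * transpose_mat B)"
proof -
  have Bt: "transpose_mat B \<in> carrier_mat l k'" using assms(2) by simp
  show ?thesis
    by (simp add: transpose_smult_mat mult_smult_assoc_mat[OF assms(1) smult_carrier_mat[OF Bt]]
        mult_smult_distrib[OF assms(1) Bt] smult_smult_mat)
qed

lemma pm1_matD:
  "pm1_mat A \<Longrightarrow> A \<in> carrier_mat k l \<Longrightarrow> i < k \<Longrightarrow> j < l \<Longrightarrow> A $$ (i, j) = 1 \<or> A $$ (i, j) = -1"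
  by (simp add: pm1_mat_def)

lemma pm1_mat_smult:
  assumes "c = 1 \<or> c = -1" "pm1_mat A"
  shows "pm1_mat (c \<cdot>\<^sub>m A)"
  using assms by (force simp: pm1_mat_def)

section \<open>Block matrices\<close>

definition blocks_mat :: "nat \<Rightarrow> nat \<Rightarrow> (nat \<Rightarrow> nat \<Rightarrow> 'a mat) \<Rightarrow> 'a mat" where
  "blocks_mat m n F = mat (m * n) (m * n) (\<lambda>(r, c). F (r div n) (c div n) $$ (r mod n, c mod n))"

lemma dim_blocks_mat [simp]:
  "dim_row (blocks_mat m n F) = m * n" "dim_col (blocks_mat m n F) = m * n"
  by (simp_all add: blocks_mat_def)

lemma blocks_mat_carrier [simp]: "blocks_mat m n F \<in> carrier_mat (m * n) (m * n)"
  by (simp add: carrier_matI)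

lemma index_blocks_mat:
  "r < m * n \<Longrightarrow> c < m * n \<Longrightarrow>
    blocks_mat m n F $$ (r, c) = F (r div n) (c div n) $$ (r mod n, c mod n)"
  by (simp add: blocks_mat_def)

lemma blocks_mat_mult_transpose:
  fixes F G :: "nat \<Rightarrow> nat \<Rightarrow> 'a::comm_semiring_0 mat"
  assumes F: "\<And>p q. p < m \<Longrightarrow> q < m \<Longrightarrow> F p q \<in> carrier_mat n n"
    and G: "\<And>p q. p < m \<Longrightarrow> q < m \<Longrightarrow> G p q \<in> carrier_mat n n"
    and r: "r < m * n" "r' < m * n"
  shows "(blocks_mat m n F * transpose_mat (blocks_mat m n G)) $$ (r, r') =
    (\<Sum>q<m. (F (r div n) q * transpose_mat (G (r' div n) q)) $$ (r mod n, r' mod n))"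
proof -
  have n: "n > 0" using r by (cases n) auto
  have p: "r div n < m" "r' div n < m" using r by (simp_all add: less_mult_imp_div_less)
  have "(blocks_mat m n F * transpose_mat (blocks_mat m n G)) $$ (r, r') =
      (\<Sum>q<m. \<Sum>c<n. blocks_mat m n F $$ (r, q * n + c) * blocks_mat m n G $$ (r', q * n + c))"
    by (simp add: index_mult_transpose_mat[OF blocks_mat_carrier blocks_mat_carrier r]
        sum_lessThan_mult_nat)
  also have "\<dots> = (\<Sum>q<m. \<Sum>c<n. F (r div n) q $$ (r mod n, c) * G (r' div n) q $$ (r' mod n, c))"
  proof (intro sum.cong refl)
    fix q c assume qc: "q \<in> {..<m}" "c \<in> {..<n}"
    then have "q * n + c < m * n" by (simp add: mult_add_less_mult)
    with qc show "blocks_mat m n F $$ (r, q * n + c) * blocks_mat m n G $$ (r', q * n + c) =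
        F (r div n) q $$ (r mod n, c) * G (r' div n) q $$ (r' mod n, c)"
      using r by (simp add: index_blocks_mat)
  qed
  also have "\<dots> = (\<Sum>q<m. (F (r div n) q * transpose_mat (G (r' div n) q)) $$ (r mod n, r' mod n))"
  proof (intro sum.cong refl)
    fix q assume "q \<in> {..<m}"
    then show "(\<Sum>c<n. F (r div n) q $$ (r mod n, c) * G (r' div n) q $$ (r' mod n, c))
        = (F (r div n) q * transpose_mat (G (r' div n) q)) $$ (r mod n, r' mod n)"
      using index_mult_transpose_mat[OF F G, OF p(1) _ p(2) _ mod_less_divisor mod_less_divisor] n
      by simp
  qed
  finally show ?thesis .
qed

lemma pm1_blocks_mat:
  assumes "\<And>p q. p < m \<Longrightarrow> q < m \<Longrightarrow> F p q \<in> carrier_mat n n \<and> pm1_mat (F p q)"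
  shows "pm1_mat (blocks_mat m n F)"
  unfolding pm1_mat_def
proof (intro allI impI)
  fix r c assume "r < dim_row (blocks_mat m n F)" "c < dim_col (blocks_mat m n F)"
  then have rc: "r < m * n" "c < m * n" by (simp_all add: blocks_mat_def)
  then have "n > 0" by (cases n) auto
  moreover have "F (r div n) (c div n) \<in> carrier_mat n n" "pm1_mat (F (r div n) (c div n))"
    using assms[OF less_mult_imp_div_less less_mult_imp_div_less, OF rc] by simp_all
  ultimately show "blocks_mat m n F $$ (r, c) = 1 \<or> blocks_mat m n F $$ (r, c) = -1"
    using rc by (simp add: index_blocks_mat pm1_mat_def)
qed

definition reindex_rows :: "(nat \<Rightarrow> nat) \<Rightarrow> 'a mat \<Rightarrow> 'a mat" where
  "reindex_rows \<sigma> A = mat (dim_row A) (dim_col A) (\<lambda>(i, j). A $$ (\<sigma> i, j))"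

lemma reindex_rows_carrier [simp]: "reindex_rows \<sigma> A \<in> carrier_mat (dim_row A) (dim_col A)"
  by (simp add: reindex_rows_def)

lemma reindex_rows_mult_transpose:
  assumes "A \<in> carrier_mat k l" "B \<in> carrier_mat k' l" "i < k" "j < k'" "\<sigma> i < k" "\<tau> j < k'"
  shows "(reindex_rows \<sigma> A * transpose_mat (reindex_rows \<tau> B)) $$ (i, j) =
    (A * transpose_mat B) $$ (\<sigma> i, \<tau> j)"
proof -
  have "reindex_rows \<sigma> A \<in> carrier_mat k l" "reindex_rows \<tau> B \<in> carrier_mat k' l"
    using assms(1,2) by (auto simp: reindex_rows_def)
  with assms show ?thesis
    by (simp add: index_mult_transpose_mat[OF _ _ assms(3,4)] index_mult_transpose_mat[OF assms(1,2,5,6)]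
        reindex_rows_def scalar_prod_def atLeast0LessThan)
qed

lemma pm1_mat_reindex_rows:
  assumes "pm1_mat A" "\<And>i. i < dim_row A \<Longrightarrow> \<sigma> i < dim_row A"
  shows "pm1_mat (reindex_rows \<sigma> A)"
  using assms by (simp add: pm1_mat_def reindex_rows_def)

section \<open>Signed block matrices of row-permuted Hadamard matrices\<close>

lemma hadamard_mult_transpose_index:
  assumes "hadamard_mat N H" "i < N" "j < N"
  shows "(H * transpose_mat H) $$ (i, j) = (if i = j then real N else 0)"
  using assms by (simp add: hadamard_mat_def)

lemma transpose_mult_hadamard_mat:
  assumes "hadamard_mat N H"
  shows "transpose_mat H * H = real N \<cdot>\<^sub>m 1\<^sub>m N"
proof (cases "N = 0")
  case True
  with assms show ?thesis by (auto simp: hadamard_mat_def)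
next
  case False
  from assms have H: "H \<in> carrier_mat N N" and HH: "H * transpose_mat H = real N \<cdot>\<^sub>m 1\<^sub>m N"
    by (auto simp: hadamard_mat_def)
  have Ht: "transpose_mat H \<in> carrier_mat N N" using H by simp
  have "H * ((1 / real N) \<cdot>\<^sub>m transpose_mat H) = 1\<^sub>m N"
    using False by (simp add: mult_smult_distrib[OF H Ht] HH smult_smult_mat)
  then have "((1 / real N) \<cdot>\<^sub>m transpose_mat H) * H = 1\<^sub>m N"
    by (rule mat_mult_left_right_inverse[OF H smult_carrier_mat[OF Ht]])
  then have "(1 / real N) \<cdot>\<^sub>m (transpose_mat H * H) = 1\<^sub>m N"
    by (simp add: mult_smult_assoc_mat[OF Ht H])
  then have "real N \<cdot>\<^sub>m ((1 / real N) \<cdot>\<^sub>m (transpose_mat H * H)) = real N \<cdot>\<^sub>m 1\<^sub>m N"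
    by simp
  then have "(real N * (1 / real N)) \<cdot>\<^sub>m (transpose_mat H * H) = real N \<cdot>\<^sub>m 1\<^sub>m N"
    by (simp only: smult_smult_mat)
  with False show ?thesis by simp
qed

lemma weighing_mat_if_hadamard_mat: "hadamard_mat N H \<Longrightarrow> weighing_mat N N H"
  by (auto simp: hadamard_mat_def weighing_mat_def pm1_mat_def zpm1_mat_def)

lemma cross_gram_hadamard_mult_transpose:
  assumes H1: "hadamard_mat N H1" and H2: "hadamard_mat N H2"
  shows "(c \<cdot>\<^sub>m (H1 * transpose_mat H2)) * transpose_mat (c \<cdot>\<^sub>m (H1 * transpose_mat H2))
    = (c\<^sup>2 * (real N)\<^sup>2) \<cdot>\<^sub>m 1\<^sub>m N"
proof -
  from H1 have c1: "H1 \<in> carrier_mat N N" and p1: "H1 * transpose_mat H1 = real N \<cdot>\<^sub>m 1\<^sub>m N"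
    by (auto simp: hadamard_mat_def)
  from H2 have c2: "H2 \<in> carrier_mat N N" by (auto simp: hadamard_mat_def)
  have t1: "transpose_mat H1 \<in> carrier_mat N N" and t2: "transpose_mat H2 \<in> carrier_mat N N"
    using c1 c2 by auto
  have "(H1 * transpose_mat H2) * (H2 * transpose_mat H1) = H1 * ((transpose_mat H2 * H2) * transpose_mat H1)"
    using c1 c2 t1 t2 by (simp add: assoc_mult_mat[of _ N N _ N _ N])
  also have "\<dots> = real N \<cdot>\<^sub>m (H1 * transpose_mat H1)"
    using c1 t1 by (simp add: transpose_mult_hadamard_mat[OF H2] mult_smult_assoc_mat[OF one_carrier_mat t1]
        mult_smult_distrib[OF c1 t1])
  finally have gram: "(H1 * transpose_mat H2) * (H2 * transpose_mat H1) = (real N)\<^sup>2 \<cdot>\<^sub>m 1\<^sub>m N"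
    by (simp add: p1 smult_smult_mat power2_eq_square)
  have X: "H1 * transpose_mat H2 \<in> carrier_mat N N" and Y: "H2 * transpose_mat H1 \<in> carrier_mat N N"
    using c1 c2 t1 t2 by auto
  have "transpose_mat (c \<cdot>\<^sub>m (H1 * transpose_mat H2)) = c \<cdot>\<^sub>m (H2 * transpose_mat H1)"
    using transpose_mult[OF c1 t2] by (simp add: transpose_smult_mat)
  then have "(c \<cdot>\<^sub>m (H1 * transpose_mat H2)) * transpose_mat (c \<cdot>\<^sub>m (H1 * transpose_mat H2))
      = c \<cdot>\<^sub>m (c \<cdot>\<^sub>m ((H1 * transpose_mat H2) * (H2 * transpose_mat H1)))"
    by (simp add: mult_smult_assoc_mat[OF X smult_carrier_mat[OF Y]] mult_smult_distrib[OF X Y])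
  also have "\<dots> = (c\<^sup>2 * (real N)\<^sup>2) \<cdot>\<^sub>m 1\<^sub>m N"
    by (simp add: gram smult_smult_mat power2_eq_square mult.assoc)
  finally show ?thesis .
qed

lemma sum_signed_indicator_in_zpm1:
  fixes u :: "'b \<Rightarrow> real"
  assumes "finite S" and u: "\<And>b. b \<in> S \<Longrightarrow> u b = 1 \<or> u b = -1"
    and unique: "\<And>b b'. b \<in> S \<Longrightarrow> b' \<in> S \<Longrightarrow> P b \<Longrightarrow> P b' \<Longrightarrow> b = b'"
  shows "(\<Sum>b\<in>S. u b * (if P b then 1 else 0)) \<in> {0, 1, -1}"
proof (cases "\<exists>b\<in>S. P b")
  case True
  then obtain b0 where b0: "b0 \<in> S" "P b0" by blast
  have "\<not> P b" if "b \<in> S - {b0}" for b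
    using that b0 unique by blast
  then have "(\<Sum>b\<in>S - {b0}. u b * (if P b then 1 else 0)) = 0"
    by (intro sum.neutral) simp
  then have "(\<Sum>b\<in>S. u b * (if P b then 1 else 0)) = u b0"
    using \<open>finite S\<close> b0 by (simp add: sum.remove[OF _ b0(1)])
  then show ?thesis using u[OF b0(1)] by auto
qed auto

definition permuted_blocks_mat :: "real mat \<Rightarrow> (nat \<Rightarrow> nat \<Rightarrow> nat) \<Rightarrow> real mat \<Rightarrow> real mat" where
  "permuted_blocks_mat U \<sigma> G =
    blocks_mat (dim_row U) (dim_row G) (\<lambda>h b. U $$ (h, b) \<cdot>\<^sub>m reindex_rows (\<sigma> b) G)"

lemma permuted_blocks_mat_carrier:
  assumes "hadamard_mat m U" "hadamard_mat N G"
  shows "permuted_blocks_mat U \<sigma> G \<in> carrier_mat (m * N) (m * N)"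
proof -
  have "dim_row U = m" "dim_row G = N" using assms by (auto simp: hadamard_mat_def)
  then show ?thesis by (simp add: permuted_blocks_mat_def)
qed

lemma permuted_blocks_mat_mult_transpose:
  assumes U: "hadamard_mat m U" and G: "hadamard_mat N G"
    and \<sigma>: "\<And>b \<rho>. b < m \<Longrightarrow> \<rho> < N \<Longrightarrow> \<sigma> b \<rho> < N"
    and \<tau>: "\<And>b \<rho>. b < m \<Longrightarrow> \<rho> < N \<Longrightarrow> \<tau> b \<rho> < N"
    and r: "r < m * N" "r' < m * N"
  shows "(permuted_blocks_mat U \<sigma> G * transpose_mat (permuted_blocks_mat U \<tau> G)) $$ (r, r') =
    real N * (\<Sum>b<m. U $$ (r div N, b) * U $$ (r' div N, b) *
      (if \<sigma> b (r mod N) = \<tau> b (r' mod N) then 1 else 0))"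
proof -
  have dims: "dim_row U = m" "dim_row G = N" and Gc: "G \<in> carrier_mat N N"
    using U G by (auto simp: hadamard_mat_def)
  have "N > 0" using r by (cases N) auto
  then have \<rho>: "r mod N < N" "r' mod N < N" by simp_all
  have "(permuted_blocks_mat U \<sigma> G * transpose_mat (permuted_blocks_mat U \<tau> G)) $$ (r, r') =
      (\<Sum>b<m. U $$ (r div N, b) * U $$ (r' div N, b) *
        (G * transpose_mat G) $$ (\<sigma> b (r mod N), \<tau> b (r' mod N)))"
  proof -
    have Rc: "reindex_rows \<pi> G \<in> carrier_mat N N" for \<pi>
      using reindex_rows_carrier[of \<pi> G] Gc by simp
    then have blocks: "U $$ (h, b) \<cdot>\<^sub>m reindex_rows \<pi> G \<in> carrier_mat N N" for \<pi> h b
      by (rule smult_carrier_mat)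
    have entry: "(U $$ (r div N, b) \<cdot>\<^sub>m reindex_rows (\<sigma> b) G *
        transpose_mat (U $$ (r' div N, b) \<cdot>\<^sub>m reindex_rows (\<tau> b) G)) $$ (r mod N, r' mod N) =
      U $$ (r div N, b) * U $$ (r' div N, b) * (G * transpose_mat G) $$ (\<sigma> b (r mod N), \<tau> b (r' mod N))"
      if "b \<in> {..<m}" for b
    proof -
      have "(reindex_rows (\<sigma> b) G * transpose_mat (reindex_rows (\<tau> b) G)) $$ (r mod N, r' mod N) =
          (G * transpose_mat G) $$ (\<sigma> b (r mod N), \<tau> b (r' mod N))"
        using that \<rho> by (intro reindex_rows_mult_transpose[OF Gc Gc] \<sigma> \<tau>) auto
      then show ?thesis
        using \<rho> Rc[of "\<sigma> b"] Rc[of "\<tau> b"] by (simp add: smult_mult_transpose_smult[OF Rc Rc])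
    qed
    show ?thesis
      unfolding permuted_blocks_mat_def dims
      by (subst blocks_mat_mult_transpose[OF blocks blocks r]) (rule sum.cong[OF refl entry])
  qed
  also have "\<dots> = real N * (\<Sum>b<m. U $$ (r div N, b) * U $$ (r' div N, b) *
      (if \<sigma> b (r mod N) = \<tau> b (r' mod N) then 1 else 0))"
    unfolding sum_distrib_left
    using \<rho> \<sigma> \<tau> by (intro sum.cong refl) (simp add: hadamard_mult_transpose_index[OF G])
  finally show ?thesis .
qed

lemma pm1_permuted_blocks_mat:
  assumes U: "hadamard_mat m U" and G: "hadamard_mat N G"
    and \<sigma>: "\<And>b \<rho>. b < m \<Longrightarrow> \<rho> < N \<Longrightarrow> \<sigma> b \<rho> < N"
  shows "pm1_mat (permuted_blocks_mat U \<sigma> G)"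
  unfolding permuted_blocks_mat_def
proof (rule pm1_blocks_mat)
  have Uc: "U \<in> carrier_mat m m" and Gc: "G \<in> carrier_mat N N" and "pm1_mat U" "pm1_mat G"
    using U G by (auto simp: hadamard_mat_def)
  fix h b assume hb: "h < dim_row U" "b < dim_row U"
  have "reindex_rows (\<sigma> b) G \<in> carrier_mat N N"
    using reindex_rows_carrier[of "\<sigma> b" G] Gc by simp
  moreover have "U $$ (h, b) = 1 \<or> U $$ (h, b) = -1"
    using Uc hb by (intro pm1_matD[OF \<open>pm1_mat U\<close> Uc]) auto
  moreover have "pm1_mat (reindex_rows (\<sigma> b) G)"
    using \<open>pm1_mat G\<close> Gc Uc hb \<sigma> by (intro pm1_mat_reindex_rows) auto
  ultimately show "U $$ (h, b) \<cdot>\<^sub>m reindex_rows (\<sigma> b) G \<in> carrier_mat (dim_row G) (dim_row G) \<and>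
      pm1_mat (U $$ (h, b) \<cdot>\<^sub>m reindex_rows (\<sigma> b) G)"
    using Gc by (simp add: pm1_mat_smult)
qed

lemma hadamard_permuted_blocks_mat:
  assumes U: "hadamard_mat m U" and G: "hadamard_mat N G"
    and \<sigma>: "\<And>b \<rho>. b < m \<Longrightarrow> \<rho> < N \<Longrightarrow> \<sigma> b \<rho> < N"
    and inj: "\<And>b. b < m \<Longrightarrow> inj_on (\<sigma> b) {..<N}"
  shows "hadamard_mat (m * N) (permuted_blocks_mat U \<sigma> G)"
proof -
  have Uc: "U \<in> carrier_mat m m" using U by (simp add: hadamard_mat_def)
  have gram: "permuted_blocks_mat U \<sigma> G * transpose_mat (permuted_blocks_mat U \<sigma> G) =
      real (m * N) \<cdot>\<^sub>m 1\<^sub>m (m * N)"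
  proof (rule eq_matI)
    fix r r' assume "r < dim_row (real (m * N) \<cdot>\<^sub>m 1\<^sub>m (m * N))" "r' < dim_col (real (m * N) \<cdot>\<^sub>m 1\<^sub>m (m * N))"
    then have r: "r < m * N" "r' < m * N" by simp_all
    then have "N > 0" by (cases N) auto
    then have \<rho>: "r mod N < N" "r' mod N < N" by simp_all
    have h: "r div N < m" "r' div N < m" using r by (simp_all add: less_mult_imp_div_less)
    have "(permuted_blocks_mat U \<sigma> G * transpose_mat (permuted_blocks_mat U \<sigma> G)) $$ (r, r') =
        real N * (\<Sum>b<m. U $$ (r div N, b) * U $$ (r' div N, b) *
          (if \<sigma> b (r mod N) = \<sigma> b (r' mod N) then 1 else 0))"
      by (rule permuted_blocks_mat_mult_transpose[OF U G \<sigma> \<sigma> r])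
    also have "\<dots> = real N * (\<Sum>b<m. U $$ (r div N, b) * U $$ (r' div N, b) *
        (if r mod N = r' mod N then 1 else 0))"
      using \<rho> by (intro arg_cong[where f = "(*) (real N)"] sum.cong refl) (simp add: inj_on_eq_iff[OF inj])
    also have "\<dots> = real N * (U * transpose_mat U) $$ (r div N, r' div N) * (if r mod N = r' mod N then 1 else 0)"
      by (simp add: index_mult_transpose_mat[OF Uc Uc h] sum_distrib_right)
    also have "\<dots> = (if r = r' then real (m * N) else 0)"
      using hadamard_mult_transpose_index[OF U h] by (auto simp: algebra_simps) (metis div_mult_mod_eq)
    finally show "(permuted_blocks_mat U \<sigma> G * transpose_mat (permuted_blocks_mat U \<sigma> G)) $$ (r, r') =
        (real (m * N) \<cdot>\<^sub>m 1\<^sub>m (m * N)) $$ (r, r')"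
      using r by simp
  qed (use permuted_blocks_mat_carrier[OF U G] in auto)
  moreover have "pm1_mat (permuted_blocks_mat U \<sigma> G)"
    using U G \<sigma> by (rule pm1_permuted_blocks_mat)
  ultimately show ?thesis
    unfolding hadamard_mat_def using permuted_blocks_mat_carrier[OF U G] by blast
qed

lemma permuted_blocks_mat_mult_transpose_cases:
  assumes U: "hadamard_mat m U" and G: "hadamard_mat N G"
    and \<sigma>: "\<And>b \<rho>. b < m \<Longrightarrow> \<rho> < N \<Longrightarrow> \<sigma> b \<rho> < N"
    and \<tau>: "\<And>b \<rho>. b < m \<Longrightarrow> \<rho> < N \<Longrightarrow> \<tau> b \<rho> < N"
    and unique: "\<And>b b' \<rho> \<rho>'. b < m \<Longrightarrow> b' < m \<Longrightarrow> \<rho> < N \<Longrightarrow> \<rho>' < N \<Longrightarrow>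
      \<sigma> b \<rho> = \<tau> b \<rho>' \<Longrightarrow> \<sigma> b' \<rho> = \<tau> b' \<rho>' \<Longrightarrow> b = b'"
    and r: "r < m * N" "r' < m * N"
  shows "(permuted_blocks_mat U \<sigma> G * transpose_mat (permuted_blocks_mat U \<tau> G)) $$ (r, r')
    \<in> {0, real N, - real N}"
proof -
  have "N > 0" using r by (cases N) auto
  then have \<rho>: "r mod N < N" "r' mod N < N" by simp_all
  have h: "r div N < m" "r' div N < m" using r by (simp_all add: less_mult_imp_div_less)
  have Uc: "U \<in> carrier_mat m m" and "pm1_mat U" using U by (simp_all add: hadamard_mat_def)
  define S where "S = (\<Sum>b<m. U $$ (r div N, b) * U $$ (r' div N, b) *
      (if \<sigma> b (r mod N) = \<tau> b (r' mod N) then 1 else 0))"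
  have eq: "(permuted_blocks_mat U \<sigma> G * transpose_mat (permuted_blocks_mat U \<tau> G)) $$ (r, r') = real N * S"
    unfolding S_def by (rule permuted_blocks_mat_mult_transpose[OF U G \<sigma> \<tau> r])
  have "S \<in> {0, 1, -1}"
    unfolding S_def
  proof (rule sum_signed_indicator_in_zpm1)
    fix b assume "b \<in> {..<m}"
    then have sign: "U $$ (h', b) = 1 \<or> U $$ (h', b) = -1" if "h' < m" for h'
      using that by (intro pm1_matD[OF \<open>pm1_mat U\<close> Uc]) auto
    from sign[OF h(1)] sign[OF h(2)]
    show "U $$ (r div N, b) * U $$ (r' div N, b) = 1 \<or> U $$ (r div N, b) * U $$ (r' div N, b) = -1"
      by auto
  qed (auto intro: unique[OF _ _ \<rho>])
  then show ?thesis by (subst eq) auto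
qed

lemma quasi_unbiased_permuted_blocks_mat:
  assumes U: "hadamard_mat m U" and G: "hadamard_mat N G"
    and \<sigma>: "\<And>b \<rho>. b < m \<Longrightarrow> \<rho> < N \<Longrightarrow> \<sigma> b \<rho> < N" "\<And>b. b < m \<Longrightarrow> inj_on (\<sigma> b) {..<N}"
    and \<tau>: "\<And>b \<rho>. b < m \<Longrightarrow> \<rho> < N \<Longrightarrow> \<tau> b \<rho> < N" "\<And>b. b < m \<Longrightarrow> inj_on (\<tau> b) {..<N}"
    and unique: "\<And>b b' \<rho> \<rho>'. b < m \<Longrightarrow> b' < m \<Longrightarrow> \<rho> < N \<Longrightarrow> \<rho>' < N \<Longrightarrow>
      \<sigma> b \<rho> = \<tau> b \<rho>' \<Longrightarrow> \<sigma> b' \<rho> = \<tau> b' \<rho>' \<Longrightarrow> b = b'"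
  shows "quasi_unbiased (m * N) (m * N) (m\<^sup>2) ((real N)\<^sup>2)
    (permuted_blocks_mat U \<sigma> G) (permuted_blocks_mat U \<tau> G)"
proof -
  let ?H\<sigma> = "permuted_blocks_mat U \<sigma> G" and ?H\<tau> = "permuted_blocks_mat U \<tau> G"
  let ?W = "(1 / sqrt ((real N)\<^sup>2)) \<cdot>\<^sub>m (?H\<sigma> * transpose_mat ?H\<tau>)"
  have H\<sigma>: "hadamard_mat (m * N) ?H\<sigma>" and H\<tau>: "hadamard_mat (m * N) ?H\<tau>"
    using hadamard_permuted_blocks_mat[OF U G] \<sigma> \<tau> by blast+
  have Wc: "?W \<in> carrier_mat (m * N) (m * N)"
    using permuted_blocks_mat_carrier[OF U G, of \<sigma>] permuted_blocks_mat_carrier[OF U G, of \<tau>]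
    by (intro smult_carrier_mat mult_carrier_mat) auto
  have entries: "?W $$ (r, r') = 0 \<or> ?W $$ (r, r') = 1 \<or> ?W $$ (r, r') = -1"
    if r: "r < m * N" "r' < m * N" for r r'
  proof -
    have "N > 0" using r by (cases N) auto
    have "dim_row (?H\<sigma> * transpose_mat ?H\<tau>) = m * N" "dim_col (?H\<sigma> * transpose_mat ?H\<tau>) = m * N"
      using Wc by auto
    with r have "?W $$ (r, r') = 1 / real N * (?H\<sigma> * transpose_mat ?H\<tau>) $$ (r, r')"
      by (simp del: index_mult_mat)
    moreover have "(?H\<sigma> * transpose_mat ?H\<tau>) $$ (r, r') \<in> {0, real N, - real N}"
      using U G \<sigma>(1) \<tau>(1) unique r by (rule permuted_blocks_mat_mult_transpose_cases)
    ultimately show ?thesis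
      using \<open>N > 0\<close> by auto
  qed
  have "zpm1_mat ?W"
    unfolding zpm1_mat_def using Wc entries by (metis carrier_matD)
  moreover have "?W * transpose_mat ?W = real (m\<^sup>2) \<cdot>\<^sub>m 1\<^sub>m (m * N)"
  proof (cases "N = 0")
    case True
    with Wc show ?thesis by (intro eq_matI) auto
  next
    case False
    then have "(1 / sqrt ((real N)\<^sup>2))\<^sup>2 * (real (m * N))\<^sup>2 = real (m\<^sup>2)"
      by (simp add: power_mult_distrib field_simps)
    then show ?thesis
      by (simp only: cross_gram_hadamard_mult_transpose[OF H\<sigma> H\<tau>])
  qed
  ultimately have "weighing_mat (m * N) (m\<^sup>2) ?W"
    using Wc by (simp add: weighing_mat_def)
  then show ?thesis
    unfolding quasi_unbiased_def using H\<sigma> H\<tau> by (blast intro: weighing_mat_if_hadamard_mat)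
qed

section \<open>The Williamson array\<close>

definition williamson_block :: "'a \<Rightarrow> 'a \<Rightarrow> 'a \<Rightarrow> 'a \<Rightarrow> nat \<Rightarrow> nat \<Rightarrow> 'a" where
  "williamson_block A B C D p q = [[A, B, C, D], [B, A, D, C], [C, D, A, B], [D, C, B, A]] ! p ! q"

definition williamson_sign :: "nat \<Rightarrow> nat \<Rightarrow> real" where
  "williamson_sign p q = [[1, 1, 1, 1], [-1, 1, -1, 1], [-1, 1, 1, -1], [-1, -1, 1, 1]] ! p ! q"

definition williamson_array :: "nat \<Rightarrow> real mat \<Rightarrow> real mat \<Rightarrow> real mat \<Rightarrow> real mat \<Rightarrow> real mat" where
  "williamson_array n A B C D =
    blocks_mat 4 n (\<lambda>p q. williamson_sign p q \<cdot>\<^sub>m williamson_block A B C D p q)"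

lemma williamson_block_mem: "p < 4 \<Longrightarrow> q < 4 \<Longrightarrow> williamson_block A B C D p q \<in> {A, B, C, D}"
  by (auto simp: williamson_block_def less_Suc_eq numeral_eq_Suc)

lemma williamson_sign_pm1: "p < 4 \<Longrightarrow> q < 4 \<Longrightarrow> williamson_sign p q = 1 \<or> williamson_sign p q = -1"
  by (auto simp: williamson_sign_def less_Suc_eq numeral_eq_Suc)

lemma williamson_rows_orthogonal:
  fixes e :: "'a \<Rightarrow> 'a \<Rightarrow> real"
  assumes sym: "\<And>X Y. X \<in> {A, B, C, D} \<Longrightarrow> Y \<in> {A, B, C, D} \<Longrightarrow> e X Y = e Y X"
    and "p < 4" "p' < 4"
  shows "(\<Sum>q<4. williamson_sign p q * williamson_sign p' q *
      e (williamson_block A B C D p q) (williamson_block A B C D p' q)) =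
    (if p = p' then e A A + e B B + e C C + e D D else 0)"
proof -
  have "e A B = e B A" "e A C = e C A" "e A D = e D A" "e B C = e C B" "e B D = e D B" "e C D = e D C"
    by (simp_all add: sym)
  with assms(2,3) show ?thesis
    by (auto simp: less_Suc_eq numeral_eq_Suc williamson_sign_def williamson_block_def)
qed

lemma williamson_gram_sum_index:
  assumes W: "williamson_type n A B C D" and a: "a < n" "a' < n"
  shows "(A * transpose_mat A) $$ (a, a') + (B * transpose_mat B) $$ (a, a') +
      (C * transpose_mat C) $$ (a, a') + (D * transpose_mat D) $$ (a, a') =
    (if a = a' then 4 * real n else 0)"
proof -
  have car: "A \<in> carrier_mat n n" "B \<in> carrier_mat n n" "C \<in> carrier_mat n n" "D \<in> carrier_mat n n"
    and sum_gram: "A * transpose_mat A + B * transpose_mat B + C * transpose_mat C + D * transpose_mat D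
      = (4 * real n) \<cdot>\<^sub>m 1\<^sub>m n"
    using W unfolding williamson_type_def by blast+
  from car a have "(A * transpose_mat A) $$ (a, a') + (B * transpose_mat B) $$ (a, a') +
      (C * transpose_mat C) $$ (a, a') + (D * transpose_mat D) $$ (a, a') =
    (A * transpose_mat A + B * transpose_mat B + C * transpose_mat C + D * transpose_mat D) $$ (a, a')"
    by simp
  also have "\<dots> = (if a = a' then 4 * real n else 0)"
    unfolding sum_gram using a by simp
  finally show ?thesis .
qed

lemma williamson_array_mult_transpose_index:
  assumes W: "williamson_type n A B C D" and r: "r < 4 * n" "r' < 4 * n"
  shows "(williamson_array n A B C D * transpose_mat (williamson_array n A B C D)) $$ (r, r') =
    (if r = r' then real (4 * n) else 0)"
proof -
  have car: "X \<in> carrier_mat n n" if "X \<in> {A, B, C, D}" for X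
    using W that unfolding williamson_type_def by blast
  have sym: "X * transpose_mat Y = Y * transpose_mat X" if "X \<in> {A, B, C, D}" "Y \<in> {A, B, C, D}" for X Y
    using W that unfolding williamson_type_def by blast
  let ?F = "\<lambda>p q. williamson_sign p q \<cdot>\<^sub>m williamson_block A B C D p q"
  have "n > 0" using r by (cases n) auto
  define p where "p = r div n"
  define p' where "p' = r' div n"
  define a where "a = r mod n"
  define a' where "a' = r' mod n"
  have p: "p < 4" "p' < 4" using r by (simp_all add: p_def p'_def less_mult_imp_div_less)
  have a: "a < n" "a' < n" using \<open>n > 0\<close> by (simp_all add: a_def a'_def)
  define e :: "real mat \<Rightarrow> real mat \<Rightarrow> real" where "e X Y = (X * transpose_mat Y) $$ (a, a')" for X Y
  have block: "(?F p q * transpose_mat (?F p' q)) $$ (a, a') =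
      williamson_sign p q * williamson_sign p' q *
      e (williamson_block A B C D p q) (williamson_block A B C D p' q)" if "q \<in> {..<4}" for q
  proof -
    from that have q: "q < 4" by simp
    have "williamson_block A B C D p q \<in> carrier_mat n n" "williamson_block A B C D p' q \<in> carrier_mat n n"
      using car[OF williamson_block_mem[OF p(1) q]] car[OF williamson_block_mem[OF p(2) q]] .
    with a show ?thesis by (simp add: e_def smult_mult_transpose_smult)
  qed
  have "?F p q \<in> carrier_mat n n" if "p < 4" "q < 4" for p q
    using car[OF williamson_block_mem[OF that]] by simp
  then have "(williamson_array n A B C D * transpose_mat (williamson_array n A B C D)) $$ (r, r') =
      (\<Sum>q<4. williamson_sign p q * williamson_sign p' q *
        e (williamson_block A B C D p q) (williamson_block A B C D p' q))"
    unfolding williamson_array_def p_def p'_def a_def a'_def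
    by (subst blocks_mat_mult_transpose[OF _ _ r]) (auto intro: sum.cong block[unfolded p_def p'_def a_def a'_def])
  also have "\<dots> = (if p = p' then e A A + e B B + e C C + e D D else 0)"
    using sym p by (intro williamson_rows_orthogonal) (simp add: e_def)
  also have "e A A + e B B + e C C + e D D = (if a = a' then 4 * real n else 0)"
    unfolding e_def by (rule williamson_gram_sum_index[OF W a])
  also have "(if p = p' then (if a = a' then 4 * real n else 0) else 0) = (if r = r' then real (4 * n) else 0)"
    using mult_add_eq_mult_add_iff[OF a, of p p'] by (simp add: p_def p'_def a_def a'_def)
  finally show ?thesis .
qed

lemma hadamard_williamson_array:
  assumes W: "williamson_type n A B C D"
  shows "hadamard_mat (4 * n) (williamson_array n A B C D)"
proof -
  have car: "X \<in> carrier_mat n n" and pm: "pm1_mat X" if "X \<in> {A, B, C, D}" for X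
    using W that unfolding williamson_type_def by blast+
  have "williamson_sign p q \<cdot>\<^sub>m williamson_block A B C D p q \<in> carrier_mat n n \<and>
      pm1_mat (williamson_sign p q \<cdot>\<^sub>m williamson_block A B C D p q)" if "p < 4" "q < 4" for p q
    using car[OF williamson_block_mem[OF that]] pm[OF williamson_block_mem[OF that]]
      williamson_sign_pm1[OF that] by (simp add: pm1_mat_smult)
  then have "pm1_mat (williamson_array n A B C D)"
    unfolding williamson_array_def by (rule pm1_blocks_mat)
  moreover have "williamson_array n A B C D * transpose_mat (williamson_array n A B C D) =
      real (4 * n) \<cdot>\<^sub>m 1\<^sub>m (4 * n)"
  proof (rule eq_matI)
    fix r r' assume "r < dim_row (real (4 * n) \<cdot>\<^sub>m 1\<^sub>m (4 * n))" "r' < dim_col (real (4 * n) \<cdot>\<^sub>m 1\<^sub>m (4 * n))"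
    then show "(williamson_array n A B C D * transpose_mat (williamson_array n A B C D)) $$ (r, r') =
        (real (4 * n) \<cdot>\<^sub>m 1\<^sub>m (4 * n)) $$ (r, r')"
      by (subst williamson_array_mult_transpose_index[OF W]) auto
  qed (simp_all add: williamson_array_def)
  ultimately show ?thesis
    unfolding hadamard_mat_def by (simp add: williamson_array_def)
qed

section \<open>The Sylvester matrix of order 4 and translations by GF(4)\<close>

definition sylvester4 :: "real mat" where
  "sylvester4 = mat 4 4 (\<lambda>(h, b). [[1, 1, 1, 1], [1, -1, 1, -1], [1, 1, -1, -1], [1, -1, -1, 1]] ! h ! b)"

lemma hadamard_sylvester4: "hadamard_mat 4 sylvester4"
proof -
  have S: "sylvester4 \<in> carrier_mat 4 4" by (simp add: sylvester4_def)
  have "sylvester4 * transpose_mat sylvester4 = real 4 \<cdot>\<^sub>m 1\<^sub>m 4"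
  proof (rule eq_matI)
    fix h h' assume "h < dim_row (real 4 \<cdot>\<^sub>m 1\<^sub>m 4)" "h' < dim_col (real 4 \<cdot>\<^sub>m 1\<^sub>m 4)"
    then have h: "h < 4" "h' < 4" by simp_all
    then show "(sylvester4 * transpose_mat sylvester4) $$ (h, h') = (real 4 \<cdot>\<^sub>m 1\<^sub>m 4) $$ (h, h')"
      unfolding index_mult_transpose_mat[OF S S h]
      by (auto simp: sylvester4_def less_Suc_eq numeral_eq_Suc)
  qed (simp_all add: sylvester4_def)
  moreover have "pm1_mat sylvester4"
    by (auto simp: pm1_mat_def sylvester4_def less_Suc_eq numeral_eq_Suc)
  ultimately show ?thesis
    by (simp add: hadamard_mat_def sylvester4_def)
qed

lemma less_4_cases: "(x::nat) < 4 \<Longrightarrow> x = 0 \<or> x = 1 \<or> x = 2 \<or> x = 3"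
  by arith

lemma xor_eq_0_iff_nat: "xor (a::nat) b = 0 \<longleftrightarrow> a = b"
  by (metis xor.assoc xor.right_neutral xor_self_eq)

lemma xor_right_cancel_nat: "xor (a::nat) c = xor b c \<longleftrightarrow> a = b"
  by (metis xor.assoc xor.right_neutral xor_self_eq)

lemma xor_eq_xor_iff_nat: "xor (a::nat) b = xor c d \<longleftrightarrow> xor a c = xor b d"
  by (metis xor.assoc xor.commute xor.left_commute xor.right_neutral xor_self_eq)

lemma xor_less_4: "x < 4 \<Longrightarrow> y < 4 \<Longrightarrow> xor x y < (4::nat)"
  by (auto dest!: less_4_cases)

(* Multiplication in GF(4) = GF(2)[w]/(w^2 + w + 1), with a + b w encoded as a + 2b,
   so that addition is xor. *)
definition gf4_mul :: "nat \<Rightarrow> nat \<Rightarrow> nat" where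
  "gf4_mul x y = [[0, 0, 0, 0], [0, 1, 2, 3], [0, 2, 3, 1], [0, 3, 1, 2]] ! x ! y"

lemma gf4_mul_less: "x < 4 \<Longrightarrow> y < 4 \<Longrightarrow> gf4_mul x y < 4"
  by (auto dest!: less_4_cases simp: gf4_mul_def)

lemma gf4_mul_xor_distrib:
  "x < 4 \<Longrightarrow> y < 4 \<Longrightarrow> b < 4 \<Longrightarrow> xor (gf4_mul x b) (gf4_mul y b) = gf4_mul (xor x y) b"
  by (auto dest!: less_4_cases simp: gf4_mul_def)

lemma gf4_mul_left_cancel:
  "d < 4 \<Longrightarrow> d \<noteq> 0 \<Longrightarrow> b < 4 \<Longrightarrow> b' < 4 \<Longrightarrow> gf4_mul d b = gf4_mul d b' \<Longrightarrow> b = b'"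
  by (auto dest!: less_4_cases simp: gf4_mul_def)

definition block_shift :: "nat \<Rightarrow> nat \<Rightarrow> nat \<Rightarrow> nat" where
  "block_shift n x \<rho> = xor (\<rho> div n) x * n + \<rho> mod n"

lemma block_shift_less: "x < 4 \<Longrightarrow> \<rho> < 4 * n \<Longrightarrow> block_shift n x \<rho> < 4 * n"
  unfolding block_shift_def
  by (intro mult_add_less_mult xor_less_4) (auto simp: less_mult_imp_div_less)

lemma block_shift_eq_iff:
  assumes "n > 0"
  shows "block_shift n x \<rho> = block_shift n y \<rho>' \<longleftrightarrow>
    xor (\<rho> div n) x = xor (\<rho>' div n) y \<and> \<rho> mod n = \<rho>' mod n"
  using assms by (simp add: block_shift_def mult_add_eq_mult_add_iff)

lemma inj_block_shift: "inj (block_shift n x)"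
proof (cases "n = 0")
  case True
  then show ?thesis by (simp add: block_shift_def inj_on_def)
next
  case False
  show ?thesis
  proof (rule injI)
    fix \<rho> \<rho>' assume "block_shift n x \<rho> = block_shift n x \<rho>'"
    with False have "xor (\<rho> div n) x = xor (\<rho>' div n) x" "\<rho> mod n = \<rho>' mod n"
      by (simp_all add: block_shift_eq_iff)
    then have "\<rho> div n = \<rho>' div n" "\<rho> mod n = \<rho>' mod n"
      by (simp_all add: xor_right_cancel_nat)
    then show "\<rho> = \<rho>'" by (metis div_mult_mod_eq)
  qed
qed

lemma block_shift_gf4_collision_free:
  assumes "n > 0" "i < 4" "j < 4" "i \<noteq> j" "b < 4" "b' < 4"
    and eq: "block_shift n (gf4_mul i b) \<rho> = block_shift n (gf4_mul j b) \<rho>'"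
    and eq': "block_shift n (gf4_mul i b') \<rho> = block_shift n (gf4_mul j b') \<rho>'"
  shows "b = b'"
proof -
  let ?t = "\<rho> div n" and ?t' = "\<rho>' div n" and ?d = "xor i j"
  have d: "?d < 4" "?d \<noteq> 0" using assms(2-4) by (simp_all add: xor_less_4 xor_eq_0_iff_nat)
  have "xor ?t ?t' = gf4_mul ?d c" if "c < 4"
    and "block_shift n (gf4_mul i c) \<rho> = block_shift n (gf4_mul j c) \<rho>'" for c
    using that assms(1-3) by (simp add: block_shift_eq_iff xor_eq_xor_iff_nat gf4_mul_xor_distrib)
  from this[OF assms(5) eq] this[OF assms(6) eq'] have "gf4_mul ?d b = gf4_mul ?d b'"
    by simp
  then show ?thesis
    using d assms(5,6) by (rule gf4_mul_left_cancel[rotated 4])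
qed

theorem proposition4p11:
  fixes n :: nat
  assumes "n > 0"
    and "\<exists>A B C D. williamson_type n A B C D"
  shows "\<exists>H :: nat \<Rightarrow> real mat.
           (\<forall>i<4. hadamard_mat (16 * n) (H i)) \<and>
           mutually_quasi_unbiased (16 * n) (16 * n) 16 (16 * (real n)^2) {..<4} H"
proof -
  obtain A B C D where "williamson_type n A B C D" using assms(2) by blast
  then have G: "hadamard_mat (4 * n) (williamson_array n A B C D)"
    by (rule hadamard_williamson_array)
  define H where "H i = permuted_blocks_mat sylvester4 (\<lambda>b. block_shift n (gf4_mul i b))
    (williamson_array n A B C D)" for i
  have shift: "block_shift n (gf4_mul i b) \<rho> < 4 * n" if "i < 4" "b < 4" "\<rho> < 4 * n" for i b \<rho>
    using that by (simp add: block_shift_less gf4_mul_less)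
  have "hadamard_mat (4 * (4 * n)) (H i)" if "i < 4" for i
    unfolding H_def
    by (rule hadamard_permuted_blocks_mat[OF hadamard_sylvester4 G])
      (auto intro: shift that inj_on_subset[OF inj_block_shift subset_UNIV])
  moreover have "quasi_unbiased (4 * (4 * n)) (4 * (4 * n)) (4\<^sup>2) ((real (4 * n))\<^sup>2) (H i) (H j)"
    if "i < 4" "j < 4" "i \<noteq> j" for i j
    unfolding H_def
    by (rule quasi_unbiased_permuted_blocks_mat[OF hadamard_sylvester4 G])
      (auto intro: shift that inj_on_subset[OF inj_block_shift subset_UNIV]
        block_shift_gf4_collision_free[OF assms(1) that])
  moreover have "4 * (4 * n) = 16 * n" "(4::nat)\<^sup>2 = 16" "(real (4 * n))\<^sup>2 = 16 * (real n)\<^sup>2"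
    by (simp_all add: power_mult_distrib)
  ultimately show ?thesis
    unfolding mutually_quasi_unbiased_def by (intro exI[of _ H]) auto
qed

end
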